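(* Let $S$ be a quasi-thin scheme on $X$. Then the $\mathbb F$-dimension of the Terwilliger $\mathbb F$-algebra $\mathcal T(y)$ of $S$ with respect to $y$ does not depend on the characteristic of the field $\mathbb F$ nor on the choice of the vertex $y\in X$.
   Context: Let $X$ be a nonempty finite set. A scheme of class $d$ on $X$ is a partition $S=\{R_0,\dots,R_d\}$ of $X\times X$ into nonempty sets such that $R_0=\{(b,b):b\in X\}$; for each $c$ there is $c'$ with $R_{c'}=\{(f,e):(e,f)\in R_c\}$; and for all $i,j,k$ the intersection number $p_{ij}^k=|\{\ell\in X:(m,\ell)\in R_i,(\ell,n)\in R_j\}|$ does not depend on $(m,n)\in R_k$. The valency is $k_a=p_{aa'}^0$; quasi-thin means all $k_a\le 2$. For a field $\mathbb F$ and $y\in X$, $yR_a=\{z:(y,z)\in R_a\}$, $A_a\in M_X(\mathbb F)$ is the $(0,1)$ adjacency matrix of $R_a$, $E_a^*(y)$ is the diagonal $(0,1)$-matrix with ones exactly at positions indexed by $yR_a$, and $\mathcal T(y)$ is the $\mathbb F$-subalgebra of $M_X(\mathbb F)$ generated by $A_0,\dots,A_d,E_0^*(y),\dots,E_d^*(y)$. *)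

theory Defs
  imports Main "HOL-Library.Function_Algebras" "HOL.Vector_Spaces"
begin

definition inter_num :: "('x \<times> 'x) set \<Rightarrow> ('x \<times> 'x) set \<Rightarrow> 'x set \<Rightarrow> 'x \<Rightarrow> 'x \<Rightarrow> nat" where
  "inter_num Ri Rj X m n = card {l \<in> X. (m, l) \<in> Ri \<and> (l, n) \<in> Rj}"

definition is_scheme :: "'x set \<Rightarrow> nat \<Rightarrow> (nat \<Rightarrow> ('x \<times> 'x) set) \<Rightarrow> bool" where
  "is_scheme X d R \<longleftrightarrow>
     finite X \<and> X \<noteq> {} \<and>
     (\<forall>i\<le>d. R i \<noteq> {} \<and> R i \<subseteq> X \<times> X) \<and>
     (\<forall>i\<le>d. \<forall>j\<le>d. i \<noteq> j \<longrightarrow> R i \<inter> R j = {}) \<and>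
     (\<Union>i\<in>{0..d}. R i) = X \<times> X \<and>
     R 0 = {(b, b) | b. b \<in> X} \<and>
     (\<forall>c\<le>d. \<exists>c'\<le>d. R c' = {(f, e). (e, f) \<in> R c}) \<and>
     (\<forall>i\<le>d. \<forall>j\<le>d. \<forall>k\<le>d. \<forall>p\<in>R k. \<forall>q\<in>R k.
        inter_num (R i) (R j) X (fst p) (snd p) = inter_num (R i) (R j) X (fst q) (snd q))"

text \<open>Valency k_a = p_{a a'}^0 where R a' is the converse of R a; evaluated at any (m,m) in R 0.
  Quasi-thin: all valencies at most 2.\<close>

definition quasi_thin :: "'x set \<Rightarrow> nat \<Rightarrow> (nat \<Rightarrow> ('x \<times> 'x) set) \<Rightarrow> bool" where
  "quasi_thin X d R \<longleftrightarrow>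
     (\<forall>a\<le>d. \<forall>a'\<le>d. R a' = {(f, e). (e, f) \<in> R a} \<longrightarrow>
        (\<forall>m\<in>X. inter_num (R a) (R a') X m m \<le> 2))"

text \<open>Matrices in M_X(F), represented as functions X \<Rightarrow> X \<Rightarrow> F (zero outside X \<times> X).\<close>

definition mscale :: "'a::field \<Rightarrow> ('x \<Rightarrow> 'x \<Rightarrow> 'a) \<Rightarrow> ('x \<Rightarrow> 'x \<Rightarrow> 'a)" where
  "mscale c M = (\<lambda>u v. c * M u v)"

definition mprod :: "'x set \<Rightarrow> ('x \<Rightarrow> 'x \<Rightarrow> 'a::field) \<Rightarrow> ('x \<Rightarrow> 'x \<Rightarrow> 'a) \<Rightarrow> ('x \<Rightarrow> 'x \<Rightarrow> 'a)" where
  "mprod X M N = (\<lambda>u v. \<Sum>w\<in>X. M u w * N w v)"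

definition adj_mat :: "('x \<times> 'x) set \<Rightarrow> ('x \<Rightarrow> 'x \<Rightarrow> 'a::field)" where
  "adj_mat Ra = (\<lambda>u v. if (u, v) \<in> Ra then 1 else 0)"

definition dual_idem :: "('x \<times> 'x) set \<Rightarrow> 'x \<Rightarrow> ('x \<Rightarrow> 'x \<Rightarrow> 'a::field)" where
  "dual_idem Ra y = (\<lambda>u v. if u = v \<and> (y, u) \<in> Ra then 1 else 0)"

text \<open>The F-subalgebra of M_X(F) generated by a set G of matrices (supported on X \<times> X).
  It contains the identity since A_0 is the identity of M_X(F).\<close>

inductive_set gen_alg :: "'x set \<Rightarrow> ('x \<Rightarrow> 'x \<Rightarrow> 'a::field) set \<Rightarrow> ('x \<Rightarrow> 'x \<Rightarrow> 'a) set"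
  for X :: "'x set" and G :: "('x \<Rightarrow> 'x \<Rightarrow> 'a) set" where
  gen: "M \<in> G \<Longrightarrow> M \<in> gen_alg X G"
| zero: "(\<lambda>u v. 0) \<in> gen_alg X G"
| one: "(\<lambda>u v. if u = v \<and> u \<in> X then 1 else 0) \<in> gen_alg X G"
| add: "M \<in> gen_alg X G \<Longrightarrow> N \<in> gen_alg X G \<Longrightarrow> (\<lambda>u v. M u v + N u v) \<in> gen_alg X G"
| smult: "M \<in> gen_alg X G \<Longrightarrow> mscale c M \<in> gen_alg X G"
| mult: "M \<in> gen_alg X G \<Longrightarrow> N \<in> gen_alg X G \<Longrightarrow> mprod X M N \<in> gen_alg X G"

definition terwilliger_alg :: "'x set \<Rightarrow> nat \<Rightarrow> (nat \<Rightarrow> ('x \<times> 'x) set) \<Rightarrow> 'x \<Rightarrow> ('x \<Rightarrow> 'x \<Rightarrow> 'a::field) set" where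
  "terwilliger_alg X d R y =
     gen_alg X ((\<lambda>a. adj_mat (R a)) ` {0..d} \<union> (\<lambda>a. dual_idem (R a) y) ` {0..d})"

end

theory Submission
  imports Defs
begin

text \<open>
  Fix a vertex \<open>y\<close> and write \<open>C\<^sub>a = yR\<^sub>a\<close>; quasi-thinness means
  \<open>|C\<^sub>a| \<in> {1, 2}\<close>. The product \<open>E\<^sup>*\<^sub>a A\<^sub>c E\<^sup>*\<^sub>b\<close> is the
  adjacency matrix of \<open>R\<^sub>c \<inter> (C\<^sub>a \<times> C\<^sub>b)\<close>, whose row and column
  counts are intersection numbers. Hence this block is empty, all of \<open>C\<^sub>a \<times> C\<^sub>b\<close>,
  or the graph of a bijection between two cells of size 2; in the last case call \<open>a\<close> and
  \<open>b\<close> linked. Composing along chains of linked indices, \<open>T(y)\<close> contains a bijection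
  \<open>C\<^sub>a \<rightarrow> C\<^sub>b\<close> whenever \<open>a\<close> and \<open>b\<close> are chained and
  \<open>|C\<^sub>a| = 2\<close>, and, subtracting it from the full block, also the other bijection.
  So \<open>T(y)\<close> is spanned by the 0/1-matrices of a partition of \<open>X \<times> X\<close>: the full
  blocks of unchained pairs and the two bijections of chained pairs. Such matrices are linearly
  independent over every field, and the number of parts depends only on the intersection numbers.
\<close>

section \<open>Adjacency matrices over a finite index set\<close>

type_synonym ('x, 'a) mat = "'x \<Rightarrow> 'x \<Rightarrow> 'a"

interpretation mv: vector_space "mscale :: 'a::field \<Rightarrow> ('x, 'a) mat \<Rightarrow> _"
  by unfold_locales (auto simp: mscale_def fun_eq_iff algebra_simps)

lemma sum_fun_apply: "(sum F A) x = (\<Sum>i\<in>A. F i x)"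
  by (induction A rule: infinite_finite_induct) auto

lemma adj_mat_apply: "adj_mat S u v = (if (u, v) \<in> S then 1 else 0)"
  by (simp add: adj_mat_def)

lemma inj_adj_mat: "inj (adj_mat :: ('x \<times> 'x) set \<Rightarrow> ('x, 'a::field) mat)"
proof (rule injI)
  fix S S' :: "('x \<times> 'x) set"
  assume "(adj_mat S :: ('x, 'a) mat) = adj_mat S'"
  then have "(adj_mat S u v :: 'a) = adj_mat S' u v" for u v
    by simp
  then have "(u, v) \<in> S \<longleftrightarrow> (u, v) \<in> S'" for u v
    by (metis adj_mat_apply zero_neq_one)
  then show "S = S'"
    by auto
qed

lemma adj_mat_empty: "adj_mat {} = 0"
  by (simp add: adj_mat_def fun_eq_iff)

lemma adj_mat_Un: "S \<inter> S' = {} \<Longrightarrow> adj_mat (S \<union> S') = adj_mat S + adj_mat S'"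
  by (auto simp: adj_mat_def fun_eq_iff)

lemma adj_mat_Diff: "S' \<subseteq> S \<Longrightarrow> adj_mat (S - S') = adj_mat S - adj_mat S'"
  by (auto simp: adj_mat_def fun_eq_iff)

lemma adj_mat_UN:
  assumes "finite I" and "pairwise (\<lambda>i j. S i \<inter> S j = {}) I"
  shows "adj_mat (\<Union>i\<in>I. S i) = (\<Sum>i\<in>I. adj_mat (S i))"
  using assms
proof (induction I rule: finite_induct)
  case (insert i I)
  then have "S i \<inter> (\<Union>j\<in>I. S j) = {}"
    by (auto simp: pairwise_insert)
  with insert show ?case
    by (simp add: adj_mat_Un pairwise_insert)
qed (simp add: adj_mat_empty)

lemma mprod_adj_mat_apply:
  assumes "finite X"
  shows "mprod X (adj_mat S) (adj_mat S') u v
       = (of_nat (card {w \<in> X. (u, w) \<in> S \<and> (w, v) \<in> S'}) :: 'a::field)"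
proof -
  have "mprod X (adj_mat S) (adj_mat S') u v
      = (\<Sum>w\<in>X. if (u, w) \<in> S \<and> (w, v) \<in> S' then (1::'a) else 0)"
    unfolding mprod_def adj_mat_def by (intro sum.cong) auto
  then show ?thesis
    using assms by (simp add: sum.inter_filter[symmetric])
qed

lemma mprod_adj_mat_eq:
  assumes "finite X"
    and "\<And>u v. card {w \<in> X. (u, w) \<in> S \<and> (w, v) \<in> S'} = (if (u, v) \<in> S'' then 1 else 0)"
  shows "mprod X (adj_mat S) (adj_mat S') = (adj_mat S'' :: ('x, 'a::field) mat)"
  by (intro ext) (simp add: mprod_adj_mat_apply[OF assms(1)] assms(2) adj_mat_apply)

lemma mprod_Id_on_left:
  assumes "finite X" and "A \<subseteq> X"
  shows "mprod X (adj_mat (Id_on A)) (adj_mat S) = adj_mat {(u, v) \<in> S. u \<in> A}"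
proof (rule mprod_adj_mat_eq[OF assms(1)])
  fix u v
  have "{w \<in> X. (u, w) \<in> Id_on A \<and> (w, v) \<in> S} = (if (u, v) \<in> {(u, v) \<in> S. u \<in> A} then {u} else {})"
    using assms(2) by auto
  then show "card {w \<in> X. (u, w) \<in> Id_on A \<and> (w, v) \<in> S} = (if (u, v) \<in> {(u, v) \<in> S. u \<in> A} then 1 else 0)"
    by simp
qed

lemma mprod_Id_on_right:
  assumes "finite X" and "B \<subseteq> X"
  shows "mprod X (adj_mat S) (adj_mat (Id_on B)) = adj_mat {(u, v) \<in> S. v \<in> B}"
proof (rule mprod_adj_mat_eq[OF assms(1)])
  fix u v
  have "{w \<in> X. (u, w) \<in> S \<and> (w, v) \<in> Id_on B} = (if (u, v) \<in> {(u, v) \<in> S. v \<in> B} then {v} else {})"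
    using assms(2) by auto
  then show "card {w \<in> X. (u, w) \<in> S \<and> (w, v) \<in> Id_on B} = (if (u, v) \<in> {(u, v) \<in> S. v \<in> B} then 1 else 0)"
    by simp
qed

definition graph_on :: "'a set \<Rightarrow> ('a \<Rightarrow> 'b) \<Rightarrow> ('a \<times> 'b) set" where
  "graph_on A f = {(u, f u) | u. u \<in> A}"

lemma mem_graph_on: "(u, w) \<in> graph_on A f \<longleftrightarrow> u \<in> A \<and> w = f u"
  by (auto simp: graph_on_def)

lemma Id_on_eq_graph_on: "Id_on A = graph_on A id"
  by (auto simp: graph_on_def Id_on_def)

lemma Collect_eq_singleton_The:
  assumes "card {x \<in> A. P x} = 1"
  shows "{x \<in> A. P x} = {THE x. x \<in> A \<and> P x}"
proof -
  obtain w where w: "{x \<in> A. P x} = {w}"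
    using assms by (rule card_1_singletonE)
  then have "(THE x. x \<in> A \<and> P x) = w"
    by (intro the_equality) auto
  with w show ?thesis
    by simp
qed

lemma graph_on_if_unique_rows_cols:
  assumes rows: "\<And>u. u \<in> A \<Longrightarrow> card {v \<in> B. (u, v) \<in> S} = 1"
    and cols: "\<And>v. v \<in> B \<Longrightarrow> card {u \<in> A. (u, v) \<in> S} = 1"
  obtains f where "bij_betw f A B" "S \<inter> A \<times> B = graph_on A f"
proof -
  define f where "f u = (THE v. v \<in> B \<and> (u, v) \<in> S)" for u
  define g where "g v = (THE u. u \<in> A \<and> (u, v) \<in> S)" for v
  have f: "{v \<in> B. (u, v) \<in> S} = {f u}" if "u \<in> A" for u
    unfolding f_def using rows[OF that] by (rule Collect_eq_singleton_The)
  have g: "{u \<in> A. (u, v) \<in> S} = {g v}" if "v \<in> B" for v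
    unfolding g_def using cols[OF that] by (rule Collect_eq_singleton_The)
  have "bij_betw f A B"
  proof (rule bij_betw_byWitness[where f' = g])
    show "\<forall>u\<in>A. g (f u) = u"
    proof
      fix u assume "u \<in> A"
      with f[OF this] have fu: "f u \<in> B" and "u \<in> {u' \<in> A. (u', f u) \<in> S}"
        by blast+
      then show "g (f u) = u"
        unfolding g[OF fu] by simp
    qed
    show "\<forall>v\<in>B. f (g v) = v"
    proof
      fix v assume "v \<in> B"
      with g[OF this] have gv: "g v \<in> A" and "v \<in> {v' \<in> B. (g v, v') \<in> S}"
        by blast+
      then show "f (g v) = v"
        unfolding f[OF gv] by simp
    qed
    show "f ` A \<subseteq> B" "g ` B \<subseteq> A"
      using f g by blast+
  qed
  moreover have "S \<inter> A \<times> B = graph_on A f"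
    using f by (auto simp: graph_on_def)
  ultimately show ?thesis
    using that by blast
qed

lemma Times_inter_eq_empty_if_count_0:
  assumes "finite A" "finite B"
    and rows: "\<And>u. u \<in> A \<Longrightarrow> card {v \<in> B. (u, v) \<in> S} = r"
    and cols: "\<And>v. v \<in> B \<Longrightarrow> card {u \<in> A. (u, v) \<in> S} = s"
    and "r = 0 \<or> s = 0"
  shows "S \<inter> A \<times> B = {}"
proof -
  have "(u, v) \<notin> S" if "u \<in> A" "v \<in> B" for u v
  proof
    assume "(u, v) \<in> S"
    with that have "{v \<in> B. (u, v) \<in> S} \<noteq> {}" "{u \<in> A. (u, v) \<in> S} \<noteq> {}"
      by auto
    moreover have "finite {v \<in> B. (u, v) \<in> S}" "finite {u \<in> A. (u, v) \<in> S}"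
      using assms(1,2) by auto
    ultimately show False
      using assms(5) rows[OF that(1)] cols[OF that(2)] by auto
  qed
  then show ?thesis
    by auto
qed

lemma Times_inter_eq_Times_if_count_full:
  assumes "finite A" "finite B"
    and rows: "\<And>u. u \<in> A \<Longrightarrow> card {v \<in> B. (u, v) \<in> S} = r"
    and cols: "\<And>v. v \<in> B \<Longrightarrow> card {u \<in> A. (u, v) \<in> S} = s"
    and "r = card B \<or> s = card A"
  shows "S \<inter> A \<times> B = A \<times> B"
proof -
  have "(u, v) \<in> S" if "u \<in> A" "v \<in> B" for u v
  proof (cases "r = card B")
    case True
    then have "{v \<in> B. (u, v) \<in> S} = B"
      using rows[OF that(1)] assms(2) by (intro card_subset_eq) auto
    with that show ?thesis
      by blast
  next
    case False
    with assms(5) have "{u \<in> A. (u, v) \<in> S} = A"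
      using cols[OF that(2)] assms(1) by (intro card_subset_eq) auto
    with that show ?thesis
      by blast
  qed
  then show ?thesis
    by auto
qed

lemma mprod_graph_on:
  assumes "finite X" and "A \<subseteq> X" and "B \<subseteq> X" and "f ` A \<subseteq> B"
  shows "mprod X (adj_mat (graph_on A f)) (adj_mat (graph_on B g)) = adj_mat (graph_on A (g \<circ> f))"
proof (rule mprod_adj_mat_eq[OF assms(1)])
  fix u v
  have "{w \<in> X. (u, w) \<in> graph_on A f \<and> (w, v) \<in> graph_on B g}
      = (if (u, v) \<in> graph_on A (g \<circ> f) then {f u} else {})"
    using assms by (auto simp: mem_graph_on)
  then show "card {w \<in> X. (u, w) \<in> graph_on A f \<and> (w, v) \<in> graph_on B g}
      = (if (u, v) \<in> graph_on A (g \<circ> f) then 1 else 0)"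
    by simp
qed

lemma mprod_add_left: "mprod X (M + N) P = mprod X M P + mprod X N P"
  by (simp add: mprod_def fun_eq_iff algebra_simps sum.distrib)

lemma mprod_add_right: "mprod X P (M + N) = mprod X P M + mprod X P N"
  by (simp add: mprod_def fun_eq_iff algebra_simps sum.distrib)

lemma mprod_mscale_left: "mprod X (mscale c M) P = mscale c (mprod X M P)"
  by (simp add: mprod_def mscale_def fun_eq_iff algebra_simps sum_distrib_left)

lemma mprod_mscale_right: "mprod X P (mscale c M) = mscale c (mprod X P M)"
  by (simp add: mprod_def mscale_def fun_eq_iff algebra_simps sum_distrib_left)

lemma mprod_zero_left: "mprod X 0 P = 0"
  by (simp add: mprod_def fun_eq_iff)

lemma mprod_zero_right: "mprod X P 0 = 0"
  by (simp add: mprod_def fun_eq_iff)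

lemma mprod_span_closed:
  fixes H :: "('x, 'a::field) mat set"
  assumes H: "\<And>M N. M \<in> H \<Longrightarrow> N \<in> H \<Longrightarrow> mprod X M N \<in> mv.span H"
    and M: "M \<in> mv.span H" and N: "N \<in> mv.span H"
  shows "mprod X M N \<in> mv.span H"
proof -
  have right: "mv.subspace {N. mprod X M' N \<in> mv.span H}" for M'
    by (rule mv.subspaceI)
      (simp_all add: mprod_zero_right mprod_add_right mprod_mscale_right
        mv.span_zero mv.span_add mv.span_scale)
  have left: "mv.subspace {M. mprod X M N \<in> mv.span H}"
    by (rule mv.subspaceI)
      (simp_all add: mprod_zero_left mprod_add_left mprod_mscale_left
        mv.span_zero mv.span_add mv.span_scale)
  have base: "mprod X M' N \<in> mv.span H" if "M' \<in> H" for M'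
    using N by (induction rule: mv.span_induct) (use right H[OF that] in auto)
  from M show ?thesis
    by (induction rule: mv.span_induct) (use left base in auto)
qed

lemma independent_adj_mat:
  assumes fin: "finite SS" and ne: "{} \<notin> SS"
    and disj: "pairwise (\<lambda>S S'. S \<inter> S' = {}) SS"
  shows "mv.independent ((adj_mat :: _ \<Rightarrow> ('x, 'a::field) mat) ` SS)"
proof
  assume "mv.dependent ((adj_mat :: _ \<Rightarrow> ('x, 'a) mat) ` SS)"
  then obtain c where c: "\<exists>M\<in>adj_mat ` SS. c M \<noteq> 0"
    "(\<Sum>M\<in>(adj_mat :: _ \<Rightarrow> ('x, 'a) mat) ` SS. mscale (c M) M) = 0"
    using mv.dependent_finite[OF finite_imageI[OF fin]] by blast
  obtain S0 where S0: "S0 \<in> SS" "c (adj_mat S0) \<noteq> 0"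
    using c(1) by auto
  have "S0 \<noteq> {}"
    using ne S0(1) by auto
  then obtain u v where uv: "(u, v) \<in> S0"
    by auto
  have "(\<Sum>S\<in>SS. mscale (c (adj_mat S)) (adj_mat S :: ('x, 'a) mat)) = 0"
    using c(2) by (simp add: sum.reindex[OF inj_on_subset[OF inj_adj_mat subset_UNIV]])
  then have "(\<Sum>S\<in>SS. mscale (c (adj_mat S)) (adj_mat S :: ('x, 'a) mat)) u v = 0"
    by simp
  then have "(\<Sum>S\<in>SS. c (adj_mat S) * (if (u, v) \<in> S then 1 else 0)) = 0"
    by (simp add: sum_fun_apply mscale_def adj_mat_def)
  moreover have "(\<Sum>S\<in>SS. c (adj_mat S) * (if (u, v) \<in> S then 1 else 0))
      = (\<Sum>S\<in>SS. if S = S0 then c (adj_mat S0) else 0)"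
    using disj S0(1) uv by (intro sum.cong) (auto simp: pairwise_def)
  ultimately show False
    using S0 fin by simp
qed

lemma subspace_gen_alg: "mv.subspace (gen_alg X G)"
proof (rule mv.subspaceI)
  show "0 \<in> gen_alg X G"
    using gen_alg.zero by (simp add: zero_fun_def)
  show "M + N \<in> gen_alg X G" if "M \<in> gen_alg X G" "N \<in> gen_alg X G" for M N
    using gen_alg.add[OF that] by (simp add: plus_fun_def)
qed (rule gen_alg.smult)

lemma gen_alg_subset_span:
  fixes H :: "('x, 'a::field) mat set"
  assumes "G \<subseteq> mv.span H"
    and "(\<lambda>u v. if u = v \<and> u \<in> X then 1 else 0) \<in> mv.span H"
    and "\<And>M N. M \<in> H \<Longrightarrow> N \<in> H \<Longrightarrow> mprod X M N \<in> mv.span H"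
  shows "gen_alg X G \<subseteq> mv.span H"
proof
  fix M assume "M \<in> gen_alg X G"
  then show "M \<in> mv.span H"
  proof (induction rule: gen_alg.induct)
    case zero
    then show ?case using mv.span_zero by (simp add: zero_fun_def)
  next
    case (add M N)
    then show ?case using mv.span_add by (simp add: plus_fun_def)
  next
    case (mult M N)
    then show ?case using mprod_span_closed assms(3) by blast
  qed (use assms(1,2) mv.span_scale in auto)
qed

section \<open>Cells of a scheme\<close>

locale scheme =
  fixes X :: "'x set" and d :: nat and R :: "nat \<Rightarrow> ('x \<times> 'x) set"
  assumes is_scheme: "is_scheme X d R"
begin

lemma finite_X: "finite X"
  using is_scheme by (simp add: is_scheme_def)

lemma R_subset: "a \<le> d \<Longrightarrow> R a \<subseteq> X \<times> X"
  using is_scheme by (simp add: is_scheme_def)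

lemma R_nonempty: "a \<le> d \<Longrightarrow> R a \<noteq> {}"
  using is_scheme by (simp add: is_scheme_def)

lemma R_disjoint:
  assumes "a \<le> d" "b \<le> d" "p \<in> R a" "p \<in> R b"
  shows "a = b"
proof -
  have "\<forall>i\<le>d. \<forall>j\<le>d. i \<noteq> j \<longrightarrow> R i \<inter> R j = {}"
    using is_scheme by (simp add: is_scheme_def)
  then show ?thesis
    using assms by blast
qed

lemma R_cover: "(\<Union>a\<le>d. R a) = X \<times> X"
  using is_scheme by (simp add: is_scheme_def atLeast0AtMost)

lemma R_0: "R 0 = Id_on X"
proof -
  have "R 0 = {(b, b) | b. b \<in> X}"
    using is_scheme by (simp add: is_scheme_def)
  then show ?thesis
    by (auto simp: Id_on_def)
qed

lemma inter_num_const: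
  assumes "i \<le> d" "j \<le> d" "k \<le> d" "(m, n) \<in> R k" "(m', n') \<in> R k"
  shows "inter_num (R i) (R j) X m n = inter_num (R i) (R j) X m' n'"
proof -
  have "\<forall>p\<in>R k. \<forall>q\<in>R k. inter_num (R i) (R j) X (fst p) (snd p) = inter_num (R i) (R j) X (fst q) (snd q)"
    using is_scheme assms(1-3) unfolding is_scheme_def by blast
  then show ?thesis
    using assms(4,5) by fastforce
qed

definition conv :: "nat \<Rightarrow> nat" where
  "conv a = (SOME a'. a' \<le> d \<and> R a' = (R a)\<inverse>)"

lemma conv_spec:
  assumes "a \<le> d"
  shows "conv a \<le> d \<and> R (conv a) = (R a)\<inverse>"
proof -
  have "\<forall>c\<le>d. \<exists>c'\<le>d. R c' = {(f, e). (e, f) \<in> R c}"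
    using is_scheme by (simp add: is_scheme_def)
  then have "\<exists>a'. a' \<le> d \<and> R a' = (R a)\<inverse>"
    using assms by (simp add: converse_unfold)
  then show ?thesis
    unfolding conv_def by (rule someI_ex)
qed

lemma conv_le: "a \<le> d \<Longrightarrow> conv a \<le> d"
  using conv_spec by blast

lemma mem_R_conv: "a \<le> d \<Longrightarrow> (u, v) \<in> R (conv a) \<longleftrightarrow> (v, u) \<in> R a"
  using conv_spec by blast

definition cell :: "'x \<Rightarrow> nat \<Rightarrow> 'x set" where
  "cell y a = {u \<in> X. (y, u) \<in> R a}"

lemma cell_subset: "cell y a \<subseteq> X"
  by (auto simp: cell_def)

lemma finite_cell: "finite (cell y a)"
  using finite_X cell_subset by (rule finite_subset[rotated])

lemma mem_cell: "a \<le> d \<Longrightarrow> u \<in> cell y a \<longleftrightarrow> (y, u) \<in> R a"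
  using R_subset by (auto simp: cell_def)

lemma cell_disjoint: "a \<le> d \<Longrightarrow> b \<le> d \<Longrightarrow> u \<in> cell y a \<Longrightarrow> u \<in> cell y b \<Longrightarrow> a = b"
  using R_disjoint by (auto simp: cell_def)

lemma cell_cover: "y \<in> X \<Longrightarrow> u \<in> X \<Longrightarrow> \<exists>a\<le>d. u \<in> cell y a"
  using R_cover by (auto simp: cell_def)

lemma card_cell_eq_inter_num:
  "a \<le> d \<Longrightarrow> card (cell y a) = inter_num (R a) (R (conv a)) X y y"
  unfolding inter_num_def cell_def using mem_R_conv by (intro arg_cong[where f = card]) auto

lemma card_cell_indep: "y \<in> X \<Longrightarrow> y' \<in> X \<Longrightarrow> a \<le> d \<Longrightarrow> card (cell y a) = card (cell y' a)"
  using card_cell_eq_inter_num inter_num_const[of a "conv a" 0 y y y' y'] conv_le R_0 by auto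

lemma cell_nonempty:
  assumes "y \<in> X" "a \<le> d"
  shows "cell y a \<noteq> {}"
proof -
  obtain p q where pq: "(p, q) \<in> R a"
    using R_nonempty[OF assms(2)] by auto
  then have "p \<in> X" "q \<in> cell p a"
    using R_subset assms(2) by (auto simp: cell_def)
  then have "card (cell p a) \<noteq> 0"
    using finite_cell by auto
  then show ?thesis
    using card_cell_indep[OF assms(1) \<open>p \<in> X\<close> assms(2)] by auto
qed

lemma card_row_eq_inter_num:
  "b \<le> d \<Longrightarrow> card {v \<in> cell y b. (u, v) \<in> R c} = inter_num (R c) (R (conv b)) X u y"
  unfolding inter_num_def cell_def using mem_R_conv by (intro arg_cong[where f = card]) auto

lemma card_col_eq_inter_num:
  "card {u \<in> cell y a. (u, v) \<in> R c} = inter_num (R a) (R c) X y v"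
  unfolding inter_num_def cell_def by (intro arg_cong[where f = card]) auto

lemma card_row_indep:
  assumes "a \<le> d" "b \<le> d" "c \<le> d" "u \<in> cell y a" "u' \<in> cell y' a"
  shows "card {v \<in> cell y b. (u, v) \<in> R c} = card {v \<in> cell y' b. (u', v) \<in> R c}"
proof -
  have "(y, u) \<in> R a" "(y', u') \<in> R a"
    using assms(1,4,5) mem_cell by auto
  then have "(u, y) \<in> R (conv a)" "(u', y') \<in> R (conv a)"
    using mem_R_conv[OF assms(1)] by auto
  then show ?thesis
    using inter_num_const[OF assms(3) conv_le[OF assms(2)] conv_le[OF assms(1)]]
      card_row_eq_inter_num[OF assms(2)] by metis
qed

lemma card_col_indep:
  assumes "a \<le> d" "b \<le> d" "c \<le> d" "v \<in> cell y b" "v' \<in> cell y' b"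
  shows "card {u \<in> cell y a. (u, v) \<in> R c} = card {u \<in> cell y' a. (u, v') \<in> R c}"
proof -
  have "(y, v) \<in> R b" "(y', v') \<in> R b"
    using assms(2,4,5) mem_cell by auto
  then show ?thesis
    using inter_num_const[OF assms(1,3,2)] card_col_eq_inter_num by metis
qed

definition block :: "'x \<Rightarrow> nat \<Rightarrow> nat \<Rightarrow> ('x \<times> 'x) set" where
  "block y a b = cell y a \<times> cell y b"

lemma block_subset: "block y a b \<subseteq> X \<times> X"
  using cell_subset by (auto simp: block_def)

lemma blocks_disjoint:
  "a \<le> d \<Longrightarrow> b \<le> d \<Longrightarrow> a' \<le> d \<Longrightarrow> b' \<le> d \<Longrightarrow> (a, b) \<noteq> (a', b') \<Longrightarrow>
   block y a b \<inter> block y a' b' = {}"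
  using cell_disjoint unfolding block_def by blast

lemma adj_mat_eq_sum_blocks:
  assumes "y \<in> X" and "S \<subseteq> X \<times> X"
  shows "adj_mat S = (\<Sum>i\<in>{..d} \<times> {..d}. adj_mat (S \<inter> block y (fst i) (snd i)))"
proof -
  define P where "P = {..d} \<times> {..d}"
  define B where "B i = S \<inter> block y (fst i) (snd i)" for i
  have "S \<subseteq> (\<Union>i\<in>P. B i)"
  proof
    fix p assume "p \<in> S"
    then obtain a b where "a \<le> d" "b \<le> d" "fst p \<in> cell y a" "snd p \<in> cell y b"
      using assms cell_cover by (metis mem_Times_iff subsetD)
    with \<open>p \<in> S\<close> have "p \<in> B (a, b)" "(a, b) \<in> P"
      by (auto simp: B_def P_def block_def mem_Times_iff)
    then show "p \<in> (\<Union>i\<in>P. B i)"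
      by blast
  qed
  then have "S = (\<Union>i\<in>P. B i)"
    by (auto simp: B_def)
  moreover have "pairwise (\<lambda>i j. B i \<inter> B j = {}) P"
  proof (rule pairwiseI)
    fix i j assume "i \<in> P" "j \<in> P" "i \<noteq> j"
    then show "B i \<inter> B j = {}"
      using blocks_disjoint[of "fst i" "snd i" "fst j" "snd j" y]
      by (auto simp: B_def P_def prod_eq_iff)
  qed
  ultimately show ?thesis
    using adj_mat_UN[of P B] by (simp add: P_def B_def)
qed

definition matches :: "'x \<Rightarrow> nat \<Rightarrow> nat \<Rightarrow> nat \<Rightarrow> bool" where
  "matches y c a b \<longleftrightarrow>
     (\<forall>u\<in>cell y a. card {v \<in> cell y b. (u, v) \<in> R c} = 1) \<and>
     (\<forall>v\<in>cell y b. card {u \<in> cell y a. (u, v) \<in> R c} = 1)"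

lemma matches_indep:
  assumes "y \<in> X" "y' \<in> X" "a \<le> d" "b \<le> d" "c \<le> d" "matches y c a b"
  shows "matches y' c a b"
proof -
  obtain u0 v0 where u0: "u0 \<in> cell y a" and v0: "v0 \<in> cell y b"
    using cell_nonempty assms(1,3,4) by blast
  show ?thesis
    unfolding matches_def
  proof (intro conjI ballI)
    fix u assume "u \<in> cell y' a"
    then show "card {v \<in> cell y' b. (u, v) \<in> R c} = 1"
      using card_row_indep[OF assms(3-5) u0 \<open>u \<in> cell y' a\<close>] assms(6) u0
      by (simp add: matches_def)
  next
    fix v assume "v \<in> cell y' b"
    then show "card {u \<in> cell y' a. (u, v) \<in> R c} = 1"
      using card_col_indep[OF assms(3-5) v0 \<open>v \<in> cell y' b\<close>] assms(6) v0
      by (simp add: matches_def)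
  qed
qed

lemma matches_graph_on:
  assumes "matches y c a b"
  obtains f where "bij_betw f (cell y a) (cell y b)" "R c \<inter> block y a b = graph_on (cell y a) f"
  using graph_on_if_unique_rows_cols[of "cell y a" "cell y b" "R c"] assms
  unfolding matches_def block_def by blast

definition linked :: "'x \<Rightarrow> (nat \<times> nat) set" where
  "linked y = {(a, b). a \<le> d \<and> b \<le> d \<and> (\<exists>c\<le>d. matches y c a b)}"

lemma linked_indep: "y \<in> X \<Longrightarrow> y' \<in> X \<Longrightarrow> linked y = linked y'"
  unfolding linked_def using matches_indep by blast

lemma card_cell_eq_if_linked: "(a, b) \<in> (linked y)\<^sup>* \<Longrightarrow> card (cell y a) = card (cell y b)"
proof (induction rule: rtrancl_induct)
  case (step b e)
  then obtain c where "matches y c b e"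
    by (auto simp: linked_def)
  then obtain f where "bij_betw f (cell y b) (cell y e)"
    by (rule matches_graph_on)
  with step.IH show ?case
    by (simp add: bij_betw_same_card)
qed simp

lemma linked_rtrancl_le: "(a, b) \<in> (linked y)\<^sup>* \<Longrightarrow> a \<le> d \<Longrightarrow> b \<le> d"
  by (induction rule: rtrancl_induct) (auto simp: linked_def)

definition paired :: "'x \<Rightarrow> nat \<Rightarrow> nat \<Rightarrow> bool" where
  "paired y a b \<longleftrightarrow> (a, b) \<in> (linked y)\<^sup>* \<and> card (cell y a) = 2"

lemma paired_indep: "y \<in> X \<Longrightarrow> y' \<in> X \<Longrightarrow> a \<le> d \<Longrightarrow> paired y a b = paired y' a b"
  unfolding paired_def by (simp add: linked_indep[of y y'] card_cell_indep[of y y'])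

lemma paired_card:
  assumes "paired y a b"
  shows "card (cell y a) = 2 \<and> card (cell y b) = 2"
  using assms card_cell_eq_if_linked[of a b y] by (simp add: paired_def)

lemma paired_trans: "paired y a b \<Longrightarrow> paired y b e \<Longrightarrow> paired y a e"
  unfolding paired_def by auto

lemma paired_refl: "card (cell y a) = 2 \<Longrightarrow> paired y a a"
  by (simp add: paired_def)

definition rep :: "'x \<Rightarrow> nat \<Rightarrow> 'x" where
  "rep y a = (SOME u. u \<in> cell y a)"

lemma rep_in_cell: "y \<in> X \<Longrightarrow> a \<le> d \<Longrightarrow> rep y a \<in> cell y a"
  using cell_nonempty[of y a] unfolding rep_def by (simp add: some_in_eq)

lemma cell_eq_rep_singleton:
  assumes "card (cell y a) = 1"
  shows "cell y a = {rep y a}"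
proof -
  obtain p where "cell y a = {p}"
    using assms by (rule card_1_singletonE)
  then show ?thesis
    by (simp add: rep_def)
qed

lemma cell_eq_rep_doubleton:
  assumes "y \<in> X" "a \<le> d" "card (cell y a) = 2"
  obtains z where "z \<noteq> rep y a" "cell y a = {rep y a, z}"
proof -
  obtain p q where "p \<noteq> q" "cell y a = {p, q}"
    using assms(3) by (meson card_2_iff)
  moreover have "rep y a \<in> {p, q}"
    using rep_in_cell[OF assms(1,2)] calculation by simp
  ultimately show ?thesis
    using that[of q] that[of p] by (auto simp: insert_commute)
qed

lemma card_half_doubleton_cell:
  assumes "y \<in> X" "a \<le> d" "card (cell y a) = 2"
  shows "card {w \<in> cell y a. (w = rep y a) = P} = 1"
proof -
  obtain z where z: "z \<noteq> rep y a" "cell y a = {rep y a, z}"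
    using cell_eq_rep_doubleton[OF assms] .
  then have "{w \<in> cell y a. (w = rep y a) = P} = (if P then {rep y a} else {z})"
    by auto
  then show ?thesis
    by simp
qed

(* The base points rep are an arbitrary choice: they fix which of the two bijections between
   cells of size 2 is called the match block, but not the number of basis elements. *)
definition match_block :: "'x \<Rightarrow> nat \<Rightarrow> nat \<Rightarrow> ('x \<times> 'x) set" where
  "match_block y a b = {(u, v) \<in> block y a b. u = rep y a \<longleftrightarrow> v = rep y b}"

lemma match_block_subset: "match_block y a b \<subseteq> block y a b"
  by (auto simp: match_block_def)

lemma graph_on_doubleton_cells:
  assumes "y \<in> X" "a \<le> d" "b \<le> d" "card (cell y a) = 2" "card (cell y b) = 2"
    and f: "bij_betw f (cell y a) (cell y b)"
  shows "graph_on (cell y a) f = match_block y a b \<or> graph_on (cell y a) f = block y a b - match_block y a b"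
proof -
  obtain za where za: "za \<noteq> rep y a" "cell y a = {rep y a, za}"
    using cell_eq_rep_doubleton[OF assms(1,2,4)] .
  obtain zb where zb: "zb \<noteq> rep y b" "cell y b = {rep y b, zb}"
    using cell_eq_rep_doubleton[OF assms(1,3,5)] .
  have f_rep: "f (rep y a) \<in> {rep y b, zb}" "f za \<in> {rep y b, zb}" "f (rep y a) \<noteq> f za"
    using f za zb unfolding bij_betw_def inj_on_def by auto
  have graph: "graph_on (cell y a) f = {(rep y a, f (rep y a)), (za, f za)}"
    using za by (auto simp: graph_on_def)
  show ?thesis
  proof (cases "f (rep y a) = rep y b")
    case True
    with f_rep have "f za = zb"
      by auto
    with True za zb have "graph_on (cell y a) f = match_block y a b"
      unfolding graph by (auto simp: match_block_def block_def)
    then show ?thesis ..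
  next
    case False
    with f_rep have "f (rep y a) = zb" "f za = rep y b"
      by auto
    with za zb have "graph_on (cell y a) f = block y a b - match_block y a b"
      unfolding graph by (auto simp: match_block_def block_def)
    then show ?thesis ..
  qed
qed

section \<open>Block matrices\<close>

lemma mprod_adj_mat_mismatch:
  assumes "b \<noteq> c" "b \<le> d" "c \<le> d" "S \<subseteq> UNIV \<times> cell y b" "S' \<subseteq> cell y c \<times> UNIV"
  shows "mprod X (adj_mat S) (adj_mat S') = 0"
proof -
  have "mprod X (adj_mat S) (adj_mat S') = adj_mat {}"
  proof (rule mprod_adj_mat_eq[OF finite_X])
    fix u v
    have empty: "{w \<in> X. (u, w) \<in> S \<and> (w, v) \<in> S'} = {}"
    proof (rule ccontr)
      assume "{w \<in> X. (u, w) \<in> S \<and> (w, v) \<in> S'} \<noteq> {}"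
      then obtain w where "w \<in> cell y b" "w \<in> cell y c"
        using assms(4,5) by blast
      then show False
        using cell_disjoint[OF assms(2,3)] assms(1) by blast
    qed
    show "card {w \<in> X. (u, w) \<in> S \<and> (w, v) \<in> S'} = (if (u, v) \<in> {} then 1 else 0)"
      unfolding empty by simp
  qed
  then show ?thesis
    by (simp add: adj_mat_empty)
qed

lemma mprod_block_block:
  "mprod X (adj_mat (block y a b)) (adj_mat (block y b e))
     = mscale (of_nat (card (cell y b))) (adj_mat (block y a e))"
proof (intro ext)
  fix u v
  have "{w \<in> X. (u, w) \<in> block y a b \<and> (w, v) \<in> block y b e}
      = (if (u, v) \<in> block y a e then cell y b else {})"
    using cell_subset by (auto simp: block_def)
  then show "mprod X (adj_mat (block y a b)) (adj_mat (block y b e)) u v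
      = mscale (of_nat (card (cell y b))) (adj_mat (block y a e)) u v"
    by (simp add: mprod_adj_mat_apply[OF finite_X] mscale_def adj_mat_apply)
qed

lemma mprod_block_match_block:
  assumes "y \<in> X" "b \<le> d" "paired y b e"
  shows "mprod X (adj_mat (block y a b)) (adj_mat (match_block y b e)) = adj_mat (block y a e)"
proof (rule mprod_adj_mat_eq[OF finite_X])
  fix u v
  have "{w \<in> X. (u, w) \<in> block y a b \<and> (w, v) \<in> match_block y b e}
      = (if (u, v) \<in> block y a e then {w \<in> cell y b. (w = rep y b) = (v = rep y e)} else {})"
    using cell_subset by (auto simp: block_def match_block_def)
  then show "card {w \<in> X. (u, w) \<in> block y a b \<and> (w, v) \<in> match_block y b e}
      = (if (u, v) \<in> block y a e then 1 else 0)"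
    using card_half_doubleton_cell[OF assms(1,2)] paired_card[OF assms(3)] by simp
qed

lemma mprod_match_block_block:
  assumes "y \<in> X" "b \<le> d" "paired y a b"
  shows "mprod X (adj_mat (match_block y a b)) (adj_mat (block y b e)) = adj_mat (block y a e)"
proof (rule mprod_adj_mat_eq[OF finite_X])
  fix u v
  have "{w \<in> X. (u, w) \<in> match_block y a b \<and> (w, v) \<in> block y b e}
      = (if (u, v) \<in> block y a e then {w \<in> cell y b. (w = rep y b) = (u = rep y a)} else {})"
    using cell_subset by (auto simp: block_def match_block_def)
  then show "card {w \<in> X. (u, w) \<in> match_block y a b \<and> (w, v) \<in> block y b e}
      = (if (u, v) \<in> block y a e then 1 else 0)"
    using card_half_doubleton_cell[OF assms(1,2)] paired_card[OF assms(3)] by simp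
qed

lemma mprod_match_block_match_block:
  assumes "y \<in> X" "b \<le> d" "paired y a b"
  shows "mprod X (adj_mat (match_block y a b)) (adj_mat (match_block y b e))
       = adj_mat (match_block y a e)"
proof (rule mprod_adj_mat_eq[OF finite_X])
  fix u v
  have "{w \<in> X. (u, w) \<in> match_block y a b \<and> (w, v) \<in> match_block y b e}
      = (if (u, v) \<in> match_block y a e then {w \<in> cell y b. (w = rep y b) = (v = rep y e)} else {})"
    using cell_subset by (auto simp: block_def match_block_def)
  then show "card {w \<in> X. (u, w) \<in> match_block y a b \<and> (w, v) \<in> match_block y b e}
      = (if (u, v) \<in> match_block y a e then 1 else 0)"
    using card_half_doubleton_cell[OF assms(1,2)] paired_card[OF assms(3)] by simp
qed

definition block_mats :: "'x \<Rightarrow> ('x, 'a::field) mat set" where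
  "block_mats y = {adj_mat (block y a b) | a b. a \<le> d \<and> b \<le> d}
     \<union> {adj_mat (match_block y a b) | a b. a \<le> d \<and> b \<le> d \<and> paired y a b}"

lemma block_in_block_mats: "a \<le> d \<Longrightarrow> b \<le> d \<Longrightarrow> adj_mat (block y a b) \<in> block_mats y"
  unfolding block_mats_def by blast

lemma match_block_in_block_mats:
  "a \<le> d \<Longrightarrow> b \<le> d \<Longrightarrow> paired y a b \<Longrightarrow> adj_mat (match_block y a b) \<in> block_mats y"
  unfolding block_mats_def by blast

lemma mprod_adjacent_block_mats_in_span:
  assumes y: "y \<in> X" and le: "a \<le> d" "b \<le> d" "e \<le> d"
    and S: "S = block y a b \<or> (S = match_block y a b \<and> paired y a b)"
    and S': "S' = block y b e \<or> (S' = match_block y b e \<and> paired y b e)"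
  shows "(mprod X (adj_mat S) (adj_mat S') :: ('x, 'a::field) mat) \<in> mv.span (block_mats y)"
proof -
  have block: "(adj_mat (block y a e) :: ('x, 'a) mat) \<in> mv.span (block_mats y)"
    using mv.span_base block_in_block_mats le(1,3) by blast
  from S S' show ?thesis
  proof (elim disjE conjE)
    assume "S = block y a b" "S' = block y b e"
    then show ?thesis
      by (simp add: mprod_block_block mv.span_scale[OF block])
  next
    assume "S = block y a b" "S' = match_block y b e" "paired y b e"
    then show ?thesis
      by (simp add: mprod_block_match_block[OF y le(2)] block)
  next
    assume "S = match_block y a b" "paired y a b" "S' = block y b e"
    then show ?thesis
      by (simp add: mprod_match_block_block[OF y le(2)] block)
  next
    assume "S = match_block y a b" "paired y a b" "S' = match_block y b e" "paired y b e"
    moreover from this have "paired y a e"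
      using paired_trans by blast
    ultimately show ?thesis
      using le(1,3) by (simp add: mprod_match_block_match_block[OF y le(2)] mv.span_base match_block_in_block_mats)
  qed
qed

lemma mprod_block_mats_in_span:
  fixes M N :: "('x, 'a::field) mat"
  assumes y: "y \<in> X" and "M \<in> block_mats y" and "N \<in> block_mats y"
  shows "mprod X M N \<in> mv.span (block_mats y)"
proof -
  obtain a b S where M: "M = adj_mat S" "a \<le> d" "b \<le> d" "S \<subseteq> block y a b"
    and S: "S = block y a b \<or> (S = match_block y a b \<and> paired y a b)"
    using assms(2) match_block_subset unfolding block_mats_def by blast
  obtain c e S' where N: "N = adj_mat S'" "c \<le> d" "e \<le> d" "S' \<subseteq> block y c e"
    and S': "S' = block y c e \<or> (S' = match_block y c e \<and> paired y c e)"
    using assms(3) match_block_subset unfolding block_mats_def by blast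
  show ?thesis
  proof (cases "b = c")
    case False
    have "S \<subseteq> UNIV \<times> cell y b" "S' \<subseteq> cell y c \<times> UNIV"
      using M(4) N(4) by (auto simp: block_def)
    then have "mprod X M N = 0"
      unfolding M(1) N(1) by (rule mprod_adj_mat_mismatch[OF False M(3) N(2)])
    then show ?thesis
      by (simp add: mv.span_zero)
  next
    case True
    with S' have "S' = block y b e \<or> (S' = match_block y b e \<and> paired y b e)"
      by simp
    with mprod_adjacent_block_mats_in_span[OF y M(2,3) N(3) S] show ?thesis
      unfolding M(1) N(1) .
  qed
qed

section \<open>The Terwilliger algebra\<close>

lemma subspace_terwilliger_alg: "mv.subspace (terwilliger_alg X d R y)"
  unfolding terwilliger_alg_def by (rule subspace_gen_alg)

lemma mprod_in_terwilliger_alg: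
  "M \<in> terwilliger_alg X d R y \<Longrightarrow> N \<in> terwilliger_alg X d R y \<Longrightarrow> mprod X M N \<in> terwilliger_alg X d R y"
  unfolding terwilliger_alg_def by (rule gen_alg.mult)

lemma adj_mat_R_in_terwilliger_alg: "c \<le> d \<Longrightarrow> adj_mat (R c) \<in> terwilliger_alg X d R y"
  unfolding terwilliger_alg_def by (rule gen_alg.gen) auto

lemma dual_idem_eq_adj_mat_Id_on: "a \<le> d \<Longrightarrow> dual_idem (R a) y = adj_mat (Id_on (cell y a))"
  by (auto simp: dual_idem_def adj_mat_def fun_eq_iff mem_cell)

lemma adj_mat_Id_on_cell_in_terwilliger_alg:
  "a \<le> d \<Longrightarrow> adj_mat (Id_on (cell y a)) \<in> terwilliger_alg X d R y"
  unfolding terwilliger_alg_def dual_idem_eq_adj_mat_Id_on[symmetric] by (rule gen_alg.gen) auto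

lemma adj_mat_inter_block_in_terwilliger_alg:
  assumes "a \<le> d" "b \<le> d" "(adj_mat S :: ('x, 'a::field) mat) \<in> terwilliger_alg X d R y"
  shows "(adj_mat (S \<inter> block y a b) :: ('x, 'a) mat) \<in> terwilliger_alg X d R y"
proof -
  have "(mprod X (mprod X (adj_mat (Id_on (cell y a))) (adj_mat S)) (adj_mat (Id_on (cell y b)))
      :: ('x, 'a) mat) \<in> terwilliger_alg X d R y"
    by (intro mprod_in_terwilliger_alg adj_mat_Id_on_cell_in_terwilliger_alg assms)
  moreover have "mprod X (mprod X (adj_mat (Id_on (cell y a))) (adj_mat S)) (adj_mat (Id_on (cell y b)))
      = (adj_mat (S \<inter> block y a b) :: ('x, 'a) mat)"
    unfolding mprod_Id_on_left[OF finite_X cell_subset] mprod_Id_on_right[OF finite_X cell_subset]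
    by (intro arg_cong[where f = adj_mat]) (auto simp: block_def)
  ultimately show ?thesis
    by simp
qed

lemma adj_mat_block_in_terwilliger_alg:
  assumes "a \<le> d" "b \<le> d"
  shows "adj_mat (block y a b) \<in> terwilliger_alg X d R y"
proof -
  have "pairwise (\<lambda>i j. R i \<inter> R j = {}) {..d}"
    using R_disjoint by (fastforce simp: pairwise_def)
  then have "adj_mat (X \<times> X) = (\<Sum>c\<in>{..d}. adj_mat (R c))"
    using adj_mat_UN[of "{..d}" R] R_cover by simp
  also have "\<dots> \<in> terwilliger_alg X d R y"
    by (rule mv.subspace_sum[OF subspace_terwilliger_alg]) (simp add: adj_mat_R_in_terwilliger_alg)
  finally have "adj_mat (X \<times> X \<inter> block y a b) \<in> terwilliger_alg X d R y"
    by (rule adj_mat_inter_block_in_terwilliger_alg[OF assms])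
  then show ?thesis
    using block_subset by (simp add: Int_absorb1)
qed

lemma linked_graph_on_in_terwilliger_alg:
  assumes "(a, b) \<in> linked y"
  obtains g where "bij_betw g (cell y a) (cell y b)"
    "(adj_mat (graph_on (cell y a) g) :: ('x, 'a::field) mat) \<in> terwilliger_alg X d R y"
proof -
  obtain c where c: "a \<le> d" "b \<le> d" "c \<le> d" "matches y c a b"
    using assms by (auto simp: linked_def)
  obtain g where g: "bij_betw g (cell y a) (cell y b)" "R c \<inter> block y a b = graph_on (cell y a) g"
    using matches_graph_on[OF c(4)] .
  have "(adj_mat (R c) :: ('x, 'a) mat) \<in> terwilliger_alg X d R y"
    using c(3) by (rule adj_mat_R_in_terwilliger_alg)
  then have "(adj_mat (graph_on (cell y a) g) :: ('x, 'a) mat) \<in> terwilliger_alg X d R y"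
    unfolding g(2)[symmetric] by (rule adj_mat_inter_block_in_terwilliger_alg[OF c(1,2)])
  with g(1) show ?thesis
    by (rule that)
qed

lemma linked_rtrancl_graph_on_in_terwilliger_alg:
  assumes "(a, b) \<in> (linked y)\<^sup>*" "a \<le> d"
  obtains f where "bij_betw f (cell y a) (cell y b)"
    "(adj_mat (graph_on (cell y a) f) :: ('x, 'a::field) mat) \<in> terwilliger_alg X d R y"
proof -
  from assms(1) have "\<exists>f. bij_betw f (cell y a) (cell y b) \<and>
      (adj_mat (graph_on (cell y a) f) :: ('x, 'a) mat) \<in> terwilliger_alg X d R y"
  proof (induction rule: rtrancl_induct)
    case base
    have "(adj_mat (graph_on (cell y a) id) :: ('x, 'a) mat) \<in> terwilliger_alg X d R y"
      using adj_mat_Id_on_cell_in_terwilliger_alg[OF assms(2)] by (simp add: Id_on_eq_graph_on)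
    then show ?case
      using bij_betw_id by blast
  next
    case (step b e)
    obtain f where f: "bij_betw f (cell y a) (cell y b)"
      "(adj_mat (graph_on (cell y a) f) :: ('x, 'a) mat) \<in> terwilliger_alg X d R y"
      using step.IH by blast
    obtain g where g: "bij_betw g (cell y b) (cell y e)"
      "(adj_mat (graph_on (cell y b) g) :: ('x, 'a) mat) \<in> terwilliger_alg X d R y"
      using linked_graph_on_in_terwilliger_alg[OF step.hyps(2)] .
    have "f ` cell y a \<subseteq> cell y b"
      using f(1) by (simp add: bij_betw_def)
    then have "mprod X (adj_mat (graph_on (cell y a) f)) (adj_mat (graph_on (cell y b) g))
        = (adj_mat (graph_on (cell y a) (g \<circ> f)) :: ('x, 'a) mat)"
      by (rule mprod_graph_on[OF finite_X cell_subset cell_subset])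
    with mprod_in_terwilliger_alg[OF f(2) g(2)] bij_betw_trans[OF f(1) g(1)] show ?case
      by auto
  qed
  with that show ?thesis
    by blast
qed

lemma adj_mat_match_block_in_terwilliger_alg:
  assumes y: "y \<in> X" and a: "a \<le> d" and "paired y a b"
  shows "(adj_mat (match_block y a b) :: ('x, 'a::field) mat) \<in> terwilliger_alg X d R y"
proof -
  have ab: "(a, b) \<in> (linked y)\<^sup>*" and b: "b \<le> d"
    using assms(3) linked_rtrancl_le[OF _ a] by (auto simp: paired_def)
  obtain f where f: "bij_betw f (cell y a) (cell y b)"
    "(adj_mat (graph_on (cell y a) f) :: ('x, 'a) mat) \<in> terwilliger_alg X d R y"
    using linked_rtrancl_graph_on_in_terwilliger_alg[OF ab a] .
  have cards: "card (cell y a) = 2" "card (cell y b) = 2"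
    using paired_card[OF assms(3)] by auto
  from graph_on_doubleton_cells[OF y a b cards f(1)] show ?thesis
  proof
    assume "graph_on (cell y a) f = match_block y a b"
    with f(2) show ?thesis
      by simp
  next
    assume graph: "graph_on (cell y a) f = block y a b - match_block y a b"
    then have "(adj_mat (match_block y a b) :: ('x, 'a) mat)
        = adj_mat (block y a b) - adj_mat (graph_on (cell y a) f)"
      using match_block_subset by (simp add: adj_mat_Diff Diff_Diff_Int Int_absorb1)
    then show ?thesis
      using mv.subspace_diff[OF subspace_terwilliger_alg adj_mat_block_in_terwilliger_alg[OF a b] f(2)]
      by simp
  qed
qed

lemma block_mats_subset_terwilliger_alg:
  assumes "y \<in> X"
  shows "block_mats y \<subseteq> terwilliger_alg X d R y"
  unfolding block_mats_def
  using adj_mat_block_in_terwilliger_alg adj_mat_match_block_in_terwilliger_alg[OF assms] by auto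

section \<open>A basis of block matrices\<close>

definition basis_index :: "'x \<Rightarrow> (nat \<times> nat \<times> bool) set" where
  "basis_index y = {(a, b, t). a \<le> d \<and> b \<le> d \<and> (t \<longrightarrow> paired y a b)}"

lemma basis_index_indep: "y \<in> X \<Longrightarrow> y' \<in> X \<Longrightarrow> basis_index y = basis_index y'"
  unfolding basis_index_def using paired_indep[of y y'] by blast

lemma finite_basis_index: "finite (basis_index y)"
proof (rule finite_subset)
  show "basis_index y \<subseteq> {..d} \<times> {..d} \<times> UNIV"
    by (auto simp: basis_index_def)
qed simp

definition basis_block :: "'x \<Rightarrow> nat \<times> nat \<times> bool \<Rightarrow> ('x \<times> 'x) set" where
  "basis_block y = (\<lambda>(a, b, t).
     if paired y a b then if t then match_block y a b else block y a b - match_block y a b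
     else block y a b)"

lemma basis_block_subset: "basis_block y (a, b, t) \<subseteq> block y a b"
  using match_block_subset by (auto simp: basis_block_def)

lemma basis_block_nonempty:
  assumes y: "y \<in> X" and i: "(a, b, t) \<in> basis_index y"
  shows "basis_block y (a, b, t) \<noteq> {}"
proof -
  have a: "a \<le> d" and b: "b \<le> d"
    using i by (auto simp: basis_index_def)
  show ?thesis
  proof (cases "paired y a b")
    case False
    then show ?thesis
      using cell_nonempty[OF y a] cell_nonempty[OF y b] by (simp add: basis_block_def block_def)
  next
    case True
    obtain z where z: "z \<noteq> rep y b" "cell y b = {rep y b, z}"
      using cell_eq_rep_doubleton[OF y b] paired_card[OF True] by blast
    have "(rep y a, rep y b) \<in> match_block y a b" "(rep y a, z) \<in> block y a b - match_block y a b"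
      using rep_in_cell[OF y a] z by (auto simp: match_block_def block_def)
    with True show ?thesis
      by (cases t) (auto simp: basis_block_def)
  qed
qed

lemma basis_blocks_disjoint:
  assumes "i \<in> basis_index y" "j \<in> basis_index y" "i \<noteq> j"
  shows "basis_block y i \<inter> basis_block y j = {}"
proof -
  obtain a b t a' b' t' where ij: "i = (a, b, t)" "j = (a', b', t')"
    by (cases i, cases j) auto
  have le: "a \<le> d" "b \<le> d" "a' \<le> d" "b' \<le> d"
    using assms(1,2) ij by (auto simp: basis_index_def)
  show ?thesis
  proof (cases "(a, b) = (a', b')")
    case False
    then show ?thesis
      using blocks_disjoint[OF le False, of y] basis_block_subset[of y a b t] basis_block_subset[of y a' b' t']
      unfolding ij by blast
  next
    case True
    then have "a' = a" "b' = b" "t' = (\<not> t)"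
      using assms(3) ij by auto
    moreover have "paired y a b"
      using assms(1,2) ij calculation by (cases t) (auto simp: basis_index_def)
    ultimately show ?thesis
      unfolding ij by (cases t) (auto simp: basis_block_def)
  qed
qed

lemma inj_on_basis_block:
  assumes "y \<in> X"
  shows "inj_on (basis_block y) (basis_index y)"
proof (rule inj_onI, rule ccontr)
  fix i j assume ij: "i \<in> basis_index y" "j \<in> basis_index y" "basis_block y i = basis_block y j" "i \<noteq> j"
  then have "basis_block y i = {}"
    using basis_blocks_disjoint[OF ij(1,2,4)] by simp
  moreover obtain a b t where "i = (a, b, t)"
    by (cases i) auto
  ultimately show False
    using basis_block_nonempty[OF assms] ij(1) by simp
qed

definition basis :: "'x \<Rightarrow> ('x, 'a::field) mat set" where
  "basis y = adj_mat ` basis_block y ` basis_index y"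

lemma independent_basis:
  assumes "y \<in> X"
  shows "mv.independent (basis y)"
  unfolding basis_def
proof (rule independent_adj_mat)
  show "finite (basis_block y ` basis_index y)"
    using finite_basis_index by simp
  show "{} \<notin> basis_block y ` basis_index y"
    using basis_block_nonempty[OF assms] by (auto simp: basis_index_def)
  show "pairwise (\<lambda>S S'. S \<inter> S' = {}) (basis_block y ` basis_index y)"
  proof (rule pairwiseI)
    fix S S' assume "S \<in> basis_block y ` basis_index y" "S' \<in> basis_block y ` basis_index y" "S \<noteq> S'"
    then obtain i j where "i \<in> basis_index y" "j \<in> basis_index y" "i \<noteq> j"
      "S = basis_block y i" "S' = basis_block y j"
      by blast
    then show "S \<inter> S' = {}"
      by (simp add: basis_blocks_disjoint)
  qed
qed

lemma card_basis: "y \<in> X \<Longrightarrow> card (basis y) = card (basis_index y)"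
  unfolding basis_def
  by (simp add: card_image inj_on_basis_block inj_on_subset[OF inj_adj_mat subset_UNIV])

lemma basis_subset_span_block_mats:
  "basis y \<subseteq> (mv.span (block_mats y) :: ('x, 'a::field) mat set)"
proof
  fix M :: "('x, 'a) mat"
  assume "M \<in> basis y"
  then obtain a b t where i: "(a, b, t) \<in> basis_index y" and M: "M = adj_mat (basis_block y (a, b, t))"
    unfolding basis_def by auto
  have a: "a \<le> d" and b: "b \<le> d"
    using i by (auto simp: basis_index_def)
  have block: "(adj_mat (block y a b) :: ('x, 'a) mat) \<in> mv.span (block_mats y)"
    by (rule mv.span_base[OF block_in_block_mats[OF a b]])
  show "M \<in> mv.span (block_mats y)"
  proof (cases "paired y a b")
    case False
    with M block show ?thesis
      by (simp add: basis_block_def)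
  next
    case True
    then have "(adj_mat (match_block y a b) :: ('x, 'a) mat) \<in> mv.span (block_mats y)"
      by (rule mv.span_base[OF match_block_in_block_mats[OF a b]])
    with M True block show ?thesis
      by (cases t) (simp_all add: basis_block_def adj_mat_Diff[OF match_block_subset] mv.span_diff)
  qed
qed

lemma block_mats_subset_span_basis:
  "block_mats y \<subseteq> (mv.span (basis y) :: ('x, 'a::field) mat set)"
proof
  fix M :: "('x, 'a) mat"
  assume "M \<in> block_mats y"
  have in_span: "(adj_mat (basis_block y (a, b, t)) :: ('x, 'a) mat) \<in> mv.span (basis y)"
    if "a \<le> d" "b \<le> d" "t \<longrightarrow> paired y a b" for a b t
    using that unfolding basis_def basis_index_def by (blast intro: mv.span_base)
  from \<open>M \<in> block_mats y\<close> consider a b where "a \<le> d" "b \<le> d" "M = adj_mat (block y a b)"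
    | a b where "a \<le> d" "b \<le> d" "paired y a b" "M = adj_mat (match_block y a b)"
    unfolding block_mats_def by blast
  then show "M \<in> mv.span (basis y)"
  proof cases
    case (1 a b)
    show ?thesis
    proof (cases "paired y a b")
      case False
      with 1 in_span[of a b False] show ?thesis
        by (simp add: basis_block_def)
    next
      case True
      have "block y a b = match_block y a b \<union> (block y a b - match_block y a b)"
        using match_block_subset by blast
      with 1 True have M: "M = adj_mat (basis_block y (a, b, True)) + adj_mat (basis_block y (a, b, False))"
        by (simp add: basis_block_def flip: adj_mat_Un)
      have "(adj_mat (basis_block y (a, b, True)) :: ('x, 'a) mat) \<in> mv.span (basis y)"
        "(adj_mat (basis_block y (a, b, False)) :: ('x, 'a) mat) \<in> mv.span (basis y)"
        using 1 True by (simp_all add: in_span)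
      then show ?thesis
        unfolding M by (rule mv.span_add)
    qed
  next
    case (2 a b)
    with in_span[of a b True] show ?thesis
      by (simp add: basis_block_def)
  qed
qed

end

section \<open>Quasi-thin schemes\<close>

locale quasi_thin_scheme = scheme X d R
  for X :: "'x set" and d :: nat and R :: "nat \<Rightarrow> ('x \<times> 'x) set" +
  assumes quasi_thin: "quasi_thin X d R"
begin

lemma card_cell_le_2:
  assumes "y \<in> X" "a \<le> d"
  shows "card (cell y a) \<le> 2"
proof -
  have "\<forall>a'\<le>d. R a' = {(f, e). (e, f) \<in> R a} \<longrightarrow> (\<forall>m\<in>X. inter_num (R a) (R a') X m m \<le> 2)"
    using quasi_thin assms(2) unfolding quasi_thin_def by blast
  moreover have "R (conv a) = {(f, e). (e, f) \<in> R a}"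
    using conv_spec[OF assms(2)] by (simp add: converse_unfold)
  ultimately have "inter_num (R a) (R (conv a)) X y y \<le> 2"
    using conv_le[OF assms(2)] assms(1) by blast
  then show ?thesis
    by (simp add: card_cell_eq_inter_num[OF assms(2)])
qed

lemma card_cell_1_or_2: "y \<in> X \<Longrightarrow> a \<le> d \<Longrightarrow> card (cell y a) = 1 \<or> card (cell y a) = 2"
  using card_cell_le_2[of y a] cell_nonempty[of y a] finite_cell[of y a] card_0_eq[of "cell y a"]
  by linarith

lemma R_inter_block_cases:
  assumes y: "y \<in> X" and a: "a \<le> d" and b: "b \<le> d" and c: "c \<le> d"
  shows "R c \<inter> block y a b = {} \<or> R c \<inter> block y a b = block y a b \<or>
    (matches y c a b \<and> card (cell y a) = 2 \<and> card (cell y b) = 2)"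
proof -
  obtain u0 v0 where u0: "u0 \<in> cell y a" and v0: "v0 \<in> cell y b"
    using cell_nonempty y a b by blast
  define r where "r = card {v \<in> cell y b. (u0, v) \<in> R c}"
  define s where "s = card {u \<in> cell y a. (u, v0) \<in> R c}"
  have rows: "card {v \<in> cell y b. (u, v) \<in> R c} = r" if "u \<in> cell y a" for u
    using card_row_indep[OF a b c u0 that] unfolding r_def by simp
  have cols: "card {u \<in> cell y a. (u, v) \<in> R c} = s" if "v \<in> cell y b" for v
    using card_col_indep[OF a b c v0 that] unfolding s_def by simp
  have "r \<le> card (cell y b)" "s \<le> card (cell y a)"
    unfolding r_def s_def by (auto intro: card_mono finite_cell)
  with card_cell_le_2[OF y a] card_cell_le_2[OF y b]
  consider "r = 0 \<or> s = 0" | "r = card (cell y b) \<or> s = card (cell y a)"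
    | "r = 1" "s = 1" "card (cell y a) = 2" "card (cell y b) = 2"
    by linarith
  then show ?thesis
  proof cases
    case 1
    then show ?thesis
      using Times_inter_eq_empty_if_count_0[OF finite_cell finite_cell rows cols]
      by (simp add: block_def)
  next
    case 2
    then show ?thesis
      using Times_inter_eq_Times_if_count_full[OF finite_cell finite_cell rows cols]
      by (simp add: block_def)
  next
    case 3
    then have "matches y c a b"
      using rows cols by (simp add: matches_def)
    with 3 show ?thesis
      by blast
  qed
qed

lemma adj_mat_R_inter_block_in_span:
  assumes y: "y \<in> X" and a: "a \<le> d" and b: "b \<le> d" and c: "c \<le> d"
  shows "(adj_mat (R c \<inter> block y a b) :: ('x, 'a::field) mat) \<in> mv.span (block_mats y)"
proof -
  have block: "(adj_mat (block y a b) :: ('x, 'a) mat) \<in> mv.span (block_mats y)"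
    by (rule mv.span_base[OF block_in_block_mats[OF a b]])
  from R_inter_block_cases[OF assms] consider
      "R c \<inter> block y a b = {}" | "R c \<inter> block y a b = block y a b"
    | "matches y c a b" "card (cell y a) = 2" "card (cell y b) = 2"
    by blast
  then show ?thesis
  proof cases
    case 1
    then show ?thesis
      by (simp add: adj_mat_empty mv.span_zero)
  next
    case 2
    with block show ?thesis
      by simp
  next
    case 3
    obtain f where f: "bij_betw f (cell y a) (cell y b)" "R c \<inter> block y a b = graph_on (cell y a) f"
      using matches_graph_on[OF 3(1)] .
    have "paired y a b"
      using 3 a b c by (auto simp: paired_def linked_def)
    then have match: "(adj_mat (match_block y a b) :: ('x, 'a) mat) \<in> mv.span (block_mats y)"
      by (rule mv.span_base[OF match_block_in_block_mats[OF a b]])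
    from graph_on_doubleton_cells[OF y a b 3(2,3) f(1)] show ?thesis
    proof
      assume "graph_on (cell y a) f = match_block y a b"
      with f(2) match show ?thesis
        by simp
    next
      assume "graph_on (cell y a) f = block y a b - match_block y a b"
      with f(2) have "(adj_mat (R c \<inter> block y a b) :: ('x, 'a) mat)
          = adj_mat (block y a b) - adj_mat (match_block y a b)"
        by (simp add: adj_mat_Diff[OF match_block_subset])
      with block match show ?thesis
        by (simp add: mv.span_diff)
    qed
  qed
qed

lemma adj_mat_R_in_span:
  assumes "y \<in> X" "c \<le> d"
  shows "(adj_mat (R c) :: ('x, 'a::field) mat) \<in> mv.span (block_mats y)"
  unfolding adj_mat_eq_sum_blocks[OF assms(1) R_subset[OF assms(2)]]
  by (intro mv.span_sum adj_mat_R_inter_block_in_span[OF assms(1) _ _ assms(2)]) auto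

lemma adj_mat_Id_on_cell_in_span:
  assumes y: "y \<in> X" and a: "a \<le> d"
  shows "(adj_mat (Id_on (cell y a)) :: ('x, 'a::field) mat) \<in> mv.span (block_mats y)"
proof (cases "card (cell y a) = 1")
  case True
  then have "Id_on (cell y a) = block y a a"
    using cell_eq_rep_singleton[OF True] by (auto simp: block_def)
  then show ?thesis
    using mv.span_base[OF block_in_block_mats[OF a a]] by simp
next
  case False
  then have two: "card (cell y a) = 2"
    using card_cell_1_or_2[OF y a] by simp
  obtain z where "z \<noteq> rep y a" "cell y a = {rep y a, z}"
    using cell_eq_rep_doubleton[OF y a two] .
  then have "Id_on (cell y a) = match_block y a a"
    by (auto simp: match_block_def block_def Id_on_def)
  then show ?thesis
    using mv.span_base[OF match_block_in_block_mats[OF a a paired_refl[OF two]]] by simp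
qed

lemma terwilliger_alg_eq_span_block_mats:
  assumes y: "y \<in> X"
  shows "terwilliger_alg X d R y = (mv.span (block_mats y) :: ('x, 'a::field) mat set)"
proof -
  have "terwilliger_alg X d R y \<subseteq> (mv.span (block_mats y) :: ('x, 'a) mat set)"
    unfolding terwilliger_alg_def
  proof (rule gen_alg_subset_span)
    show "(\<lambda>a. adj_mat (R a)) ` {0..d} \<union> (\<lambda>a. dual_idem (R a) y) ` {0..d}
        \<subseteq> (mv.span (block_mats y) :: ('x, 'a) mat set)"
      using adj_mat_R_in_span[OF y] adj_mat_Id_on_cell_in_span[OF y]
      by (auto simp: dual_idem_eq_adj_mat_Id_on)
    have "(\<lambda>u v. if u = v \<and> u \<in> X then 1 else 0) = (adj_mat (R 0) :: ('x, 'a) mat)"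
      by (auto simp: R_0 adj_mat_def fun_eq_iff)
    then show "(\<lambda>u v. if u = v \<and> u \<in> X then 1 else 0) \<in> (mv.span (block_mats y) :: ('x, 'a) mat set)"
      using adj_mat_R_in_span[OF y, of 0] by simp
  qed (rule mprod_block_mats_in_span[OF y])
  then have "mv.span (block_mats y) = (terwilliger_alg X d R y :: ('x, 'a) mat set)"
    by (rule mv.span_subspace[OF block_mats_subset_terwilliger_alg[OF y] _ subspace_terwilliger_alg])
  then show ?thesis
    by simp
qed

lemma dim_terwilliger_alg:
  assumes "y \<in> X"
  shows "mv.dim (terwilliger_alg X d R y :: ('x, 'a::field) mat set) = card (basis_index y)"
proof -
  have "terwilliger_alg X d R y = (mv.span (basis y) :: ('x, 'a) mat set)"
    unfolding terwilliger_alg_eq_span_block_mats[OF assms]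
    by (simp add: mv.span_eq basis_subset_span_block_mats block_mats_subset_span_basis)
  then have "mv.dim (terwilliger_alg X d R y :: ('x, 'a) mat set)
      = mv.dim (mv.span (basis y) :: ('x, 'a) mat set)"
    by simp
  also have "\<dots> = card (basis y :: ('x, 'a) mat set)"
    by (rule mv.dim_span_eq_card_independent[OF independent_basis[OF assms]])
  also have "\<dots> = card (basis_index y)"
    by (rule card_basis[OF assms])
  finally show ?thesis .
qed

end

theorem corollary4p7:
  fixes X :: "'x set" and d :: nat and R :: "nat \<Rightarrow> ('x \<times> 'x) set" and y1 y2 :: 'x
  assumes "is_scheme X d R" and "quasi_thin X d R" and "y1 \<in> X" and "y2 \<in> X"
  shows "vector_space.dim (mscale :: 'a::field \<Rightarrow> _)
           (terwilliger_alg X d R y1 :: ('x \<Rightarrow> 'x \<Rightarrow> 'a) set)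
       = vector_space.dim (mscale :: 'b::field \<Rightarrow> _)
           (terwilliger_alg X d R y2 :: ('x \<Rightarrow> 'x \<Rightarrow> 'b) set)"
proof -
  interpret quasi_thin_scheme X d R
    using assms(1,2) by unfold_locales
  have "mv.dim (terwilliger_alg X d R y1 :: ('x, 'a) mat set) = card (basis_index y1)"
    by (rule dim_terwilliger_alg[OF assms(3)])
  also have "\<dots> = card (basis_index y2)"
    by (simp add: basis_index_indep[OF assms(3,4)])
  also have "\<dots> = mv.dim (terwilliger_alg X d R y2 :: ('x, 'b) mat set)"
    by (rule dim_terwilliger_alg[OF assms(4), symmetric])
  finally show ?thesis .
qed

end
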